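(* For every even positive integer $n$, there exist a binary NFA with $n$ states and a binary DFA with $n$ states such that there is a tower of height $n^2-n+1$ between their languages and there is no infinite tower between their languages.
   Context: Binary means over a two-letter alphabet. For strings $v=a_1\cdots a_k$ and $w$, $v\preccurlyeq w$ if $w\in\Sigma^*a_1\Sigma^*a_2\Sigma^*\cdots\Sigma^*a_k\Sigma^*$. A sequence $(w_i)_{i=1}^r$ of strings is a tower between languages $K$ and $L$ if $w_1\in K\cup L$ and for all $i=1,\dots,r-1$: $w_i\preccurlyeq w_{i+1}$, $w_i\in K$ implies $w_{i+1}\in L$, and $w_i\in L$ implies $w_{i+1}\in K$; $r$ is its height. An infinite tower is an infinite sequence with the same properties. *)

theory Defs
  imports Main "HOL-Library.Sublist"
begin

text \<open>Automata have state set {0..<n} (so exactly n states).\<close>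

record nfa =
  init :: "nat set"
  delta :: "nat \<Rightarrow> bool \<Rightarrow> nat set"
  final :: "nat set"

definition is_nfa :: "nat \<Rightarrow> nfa \<Rightarrow> bool" where
  "is_nfa n A \<longleftrightarrow> init A \<subseteq> {..<n} \<and> final A \<subseteq> {..<n}
      \<and> (\<forall>q<n. \<forall>a. delta A q a \<subseteq> {..<n})"

definition is_dfa :: "nat \<Rightarrow> nfa \<Rightarrow> bool" where
  "is_dfa n A \<longleftrightarrow> is_nfa n A \<and> card (init A) = 1
      \<and> (\<forall>q<n. \<forall>a. card (delta A q a) \<le> 1)"

fun reach :: "nfa \<Rightarrow> nat set \<Rightarrow> bool list \<Rightarrow> nat set" where
  "reach A S [] = S"
| "reach A S (a # w) = reach A (\<Union>q\<in>S. delta A q a) w"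

definition lang :: "nfa \<Rightarrow> bool list set" where
  "lang A = {w. reach A (init A) w \<inter> final A \<noteq> {}}"

text \<open>A (finite) tower between K and L; its height is the length of the list.\<close>
definition tower :: "'a list set \<Rightarrow> 'a list set \<Rightarrow> 'a list list \<Rightarrow> bool" where
  "tower K L ws \<longleftrightarrow> ws \<noteq> [] \<and> hd ws \<in> K \<union> L \<and>
     (\<forall>i. Suc i < length ws \<longrightarrow>
        subseq (ws ! i) (ws ! Suc i) \<and>
        (ws ! i \<in> K \<longrightarrow> ws ! Suc i \<in> L) \<and>
        (ws ! i \<in> L \<longrightarrow> ws ! Suc i \<in> K))"

definition infinite_tower :: "'a list set \<Rightarrow> 'a list set \<Rightarrow> (nat \<Rightarrow> 'a list) \<Rightarrow> bool" where
  "infinite_tower K L f \<longleftrightarrow> f 0 \<in> K \<union> L \<and>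
     (\<forall>i. subseq (f i) (f (Suc i)) \<and>
        (f i \<in> K \<longrightarrow> f (Suc i) \<in> L) \<and>
        (f i \<in> L \<longrightarrow> f (Suc i) \<in> K))"

end

theory Submission
  imports Defs
begin

text \<open>Read False as a and True as b. The NFA accepts only words whose leading run of a's
  has odd length and whose runs of a's are all shorter than n; the DFA
  accepts exactly the words whose leading run of a's has even length and which contain at most
  n - 2 letters b. By the parity of the leading run the languages are disjoint, so the words of
  an infinite tower grow strictly in length. But each word of the NFA language in a tower lies
  below a word of the DFA language, hence has at most n - 2 letters b and length below n^2.
  The finite tower consists of the words a^(t mod n) (b a^(n-1))^(t div n) for t < n(n - 1),
  followed by a^n (b a^(n-1))^(n-2): each step inserts one letter, and membership alternates
  with the parity of t because n is even.\<close>

lemma reach_append: "reach A S (u @ v) = reach A (reach A S u) v"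
  by (induction u arbitrary: S) auto

lemma reach_snoc: "reach A S (w @ [x]) = (\<Union>q\<in>reach A S w. delta A q x)"
  by (simp add: reach_append)

lemma reach_empty: "reach A {} w = {}"
  by (induction w) auto

lemma reach_Un: "reach A (S \<union> T) w = reach A S w \<union> reach A T w"
  by (induction w arbitrary: S T) (auto simp: UN_Un)

lemma subseq_count_list_le: "subseq xs ys \<Longrightarrow> count_list xs x \<le> count_list ys x"
  unfolding count_list_eq_length_filter using list_emb_length subseq_filter by blast

lemma tower_if_alternating:
  assumes "K \<inter> L = {}" and "ws \<noteq> []"
    and alt: "\<And>i. i < length ws \<Longrightarrow> ws ! i \<in> (if even i then L else K)"
    and chain: "\<And>i. Suc i < length ws \<Longrightarrow> subseq (ws ! i) (ws ! Suc i)"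
  shows "tower K L ws"
proof -
  have "hd ws \<in> L"
    using alt[of 0] \<open>ws \<noteq> []\<close> by (simp add: hd_conv_nth)
  moreover have "(ws ! i \<in> K \<longrightarrow> ws ! Suc i \<in> L) \<and> (ws ! i \<in> L \<longrightarrow> ws ! Suc i \<in> K)"
    if "Suc i < length ws" for i
    using alt[of i] alt[of "Suc i"] that \<open>K \<inter> L = {}\<close> by (auto split: if_splits)
  ultimately show ?thesis
    unfolding tower_def using \<open>ws \<noteq> []\<close> chain by blast
qed

lemma no_infinite_tower_if_bounded:
  assumes disj: "K \<inter> L = {}"
    and bound: "\<And>w v. w \<in> K \<Longrightarrow> v \<in> L \<Longrightarrow> subseq w v \<Longrightarrow> length w < N"
  shows "\<not> infinite_tower K L f"
proof
  assume T: "infinite_tower K L f"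
  have step: "subseq (f i) (f (Suc i)) \<and> (f i \<in> K \<longrightarrow> f (Suc i) \<in> L) \<and> (f i \<in> L \<longrightarrow> f (Suc i) \<in> K)" for i
    using T unfolding infinite_tower_def by blast
  have mem: "f i \<in> K \<union> L" for i
    by (induction i) (use T step in \<open>auto simp: infinite_tower_def\<close>)
  have "f i \<noteq> f (Suc i)" for i
    using mem[of i] step[of i] disj by auto
  then have "length (f i) < length (f (Suc i))" for i
    using step[of i] list_emb_length subseq_same_length by (metis le_neq_implies_less)
  then have len: "i \<le> length (f i)" for i
    by (induction i) (auto intro: Suc_leI order.strict_trans1)
  obtain j where "N \<le> j" "f j \<in> K"
    using mem[of N] step[of N] le_SucI by blast
  then have "length (f j) < N"
    using bound step[of j] by blast
  with len[of j] \<open>N \<le> j\<close> show False by simp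
qed

definition lead_false :: "bool list \<Rightarrow> nat" where
  "lead_false w = length (takeWhile Not w)"

lemma lead_false_snoc:
  "lead_false (w @ [x]) = (if True \<in> set w then lead_false w else if x then length w else Suc (length w))"
  unfolding lead_false_def by (auto simp: takeWhile_append)

lemma lead_false_no_True: "True \<notin> set w \<Longrightarrow> lead_false w = length w"
  unfolding lead_false_def by (metis (full_types) takeWhile_eq_all_conv)

definition tower_nfa :: "nat \<Rightarrow> nfa" where
  "tower_nfa n = \<lparr>init = {0},
     delta = (\<lambda>q x. if x then (if odd q \<and> q < n then {0, 1} else {})
                     else (if q + 1 < n then {q + 1} else {})),
     final = {q. odd q \<and> q < n}\<rparr>"

definition tower_dfa :: "nat \<Rightarrow> nfa" where
  "tower_dfa n = \<lparr>init = {0},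
     delta = (\<lambda>q x. if x then (if q = 0 \<and> 2 < n then {2} else if 2 \<le> q \<and> q + 1 < n then {q + 1} else {})
                     else (if q = 0 then {1} else if q = 1 then {0} else {q})),
     final = {q. q = 0 \<or> (2 \<le> q \<and> q < n)}\<rparr>"

lemma is_nfa_tower_nfa: "2 \<le> n \<Longrightarrow> is_nfa n (tower_nfa n)"
  by (auto simp: is_nfa_def tower_nfa_def)

lemma is_dfa_tower_dfa: "2 \<le> n \<Longrightarrow> is_dfa n (tower_dfa n)"
  by (auto simp: is_dfa_def is_nfa_def tower_dfa_def)

lemma reach_tower_dfa:
  "reach (tower_dfa n) {0} w =
     (if True \<notin> set w then {if even (length w) then 0 else 1}
      else if even (lead_false w) \<and> count_list w True + 2 \<le> n then {count_list w True + 1}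
      else {})"
proof (induction w rule: rev_induct)
  case Nil
  then show ?case by simp
next
  case (snoc x w)
  have "count_list w True \<noteq> 0" if "True \<in> set w"
    using that by (simp add: count_list_0_iff)
  with snoc show ?case
    by (cases x) (auto simp: reach_snoc tower_dfa_def lead_false_snoc)
qed

lemma lang_tower_dfa:
  assumes "2 \<le> n"
  shows "lang (tower_dfa n) = {w. even (lead_false w) \<and> count_list w True + 2 \<le> n}"
proof (intro set_eqI)
  fix w
  have fin: "final (tower_dfa n) = {q. q = 0 \<or> (2 \<le> q \<and> q < n)}" and "init (tower_dfa n) = {0}"
    by (simp_all add: tower_dfa_def)
  then have "w \<in> lang (tower_dfa n) \<longleftrightarrow> reach (tower_dfa n) {0} w \<inter> final (tower_dfa n) \<noteq> {}"
    by (simp add: lang_def)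
  also have "\<dots> \<longleftrightarrow> even (lead_false w) \<and> count_list w True + 2 \<le> n"
  proof (cases "True \<in> set w")
    case True
    then have "count_list w True \<noteq> 0" by (simp add: count_list_0_iff)
    with True show ?thesis by (simp add: reach_tower_dfa fin)
  next
    case False
    with assms show ?thesis by (simp add: reach_tower_dfa fin lead_false_no_True)
  qed
  finally show "w \<in> lang (tower_dfa n) \<longleftrightarrow> w \<in> {w. even (lead_false w) \<and> count_list w True + 2 \<le> n}"
    by simp
qed

text \<open>Each True resets the state to 0 or 1 and each False increments it below n.\<close>
lemma reach_tower_nfa_invariant:
  assumes "q \<in> reach (tower_nfa n) {0} w" and "0 < n"
  shows "q < n \<and> length w \<le> n * count_list w True + q
         \<and> (True \<notin> set w \<longrightarrow> q = length w) \<and> (True \<in> set w \<longrightarrow> odd (lead_false w))"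
  using assms(1)
proof (induction w arbitrary: q rule: rev_induct)
  case Nil
  then show ?case using assms(2) by (simp add: tower_nfa_def)
next
  case (snoc x w)
  from snoc.prems obtain p where p: "p \<in> reach (tower_nfa n) {0} w" and q: "q \<in> delta (tower_nfa n) p x"
    by (auto simp: reach_snoc)
  note IH = snoc.IH[OF p]
  show ?case
  proof (cases x)
    case True
    then have "odd p" "p < n" "q \<in> {0, 1}"
      using q by (auto simp: tower_nfa_def split: if_splits)
    moreover have "Suc 0 < n"
      using \<open>odd p\<close> \<open>p < n\<close> by (cases p) auto
    ultimately show ?thesis
      using IH True by (auto simp: lead_false_snoc algebra_simps)
  next
    case False
    then have "q = p + 1" "p + 1 < n"
      using q by (auto simp: tower_nfa_def split: if_splits)
    then show ?thesis
      using IH False by (auto simp: lead_false_snoc)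
  qed
qed

lemma lang_tower_nfaD:
  assumes "w \<in> lang (tower_nfa n)"
  shows "odd (lead_false w) \<and> length w \<le> n * count_list w True + (n - 1)"
proof -
  from assms obtain q where q: "q \<in> reach (tower_nfa n) {0} w" "odd q" "q < n"
    by (auto simp: lang_def tower_nfa_def)
  then have "0 < n" by simp
  then show ?thesis
    using reach_tower_nfa_invariant[OF q(1)] q lead_false_no_True[of w] by fastforce
qed

lemma lang_tower_nfa_dfa_disjoint: "2 \<le> n \<Longrightarrow> lang (tower_nfa n) \<inter> lang (tower_dfa n) = {}"
  using lang_tower_nfaD lang_tower_dfa by fastforce

lemma no_infinite_tower_nfa_dfa:
  assumes "2 \<le> n"
  shows "\<not> infinite_tower (lang (tower_nfa n)) (lang (tower_dfa n)) f"
proof (rule no_infinite_tower_if_bounded[OF lang_tower_nfa_dfa_disjoint[OF assms]])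
  fix w v
  assume w: "w \<in> lang (tower_nfa n)" and "v \<in> lang (tower_dfa n)" "subseq w v"
  then have "count_list w True \<le> n - 2"
    using lang_tower_dfa[OF assms] subseq_count_list_le[of w v True] by auto
  moreover have "length w \<le> n * count_list w True + (n - 1)"
    using lang_tower_nfaD[OF w] by blast
  ultimately have "length w \<le> n * (n - 2) + (n - 1)"
    by (meson add_le_mono1 mult_le_mono2 order_trans)
  also have "\<dots> < n * n"
    using assms by (cases n) (auto simp: algebra_simps)
  finally show "length w < n * n" .
qed

definition block :: "nat \<Rightarrow> bool list" where
  "block n = True # replicate (n - 1) False"

definition tower_word :: "nat \<Rightarrow> nat \<Rightarrow> nat \<Rightarrow> bool list" where
  "tower_word n j k = replicate j False @ concat (replicate k (block n))"

definition tower_words :: "nat \<Rightarrow> bool list list" where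
  "tower_words n =
     map (\<lambda>t. tower_word n (t mod n) (t div n)) [0..<n * (n - 1)] @ [tower_word n n (n - 2)]"

lemma lead_false_tower_word: "lead_false (tower_word n j k) = j"
  by (cases k) (simp_all add: lead_false_def tower_word_def block_def takeWhile_append)

lemma count_list_tower_word: "count_list (tower_word n j k) True = k"
  by (induction k) (simp_all add: tower_word_def block_def)

lemma tower_word_in_lang_dfa:
  "2 \<le> n \<Longrightarrow> even j \<Longrightarrow> k + 2 \<le> n \<Longrightarrow> tower_word n j k \<in> lang (tower_dfa n)"
  by (simp add: lang_tower_dfa lead_false_tower_word count_list_tower_word)

lemma reach_tower_nfa_replicate:
  "p < n \<Longrightarrow> reach (tower_nfa n) {p} (replicate j False) = (if p + j < n then {p + j} else {})"
proof (induction j arbitrary: p)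
  case 0
  then show ?case by simp
next
  case (Suc j)
  then show ?case
    by (cases "p + 1 < n") (simp_all add: tower_nfa_def reach_empty)
qed

lemma reach_tower_nfa_block:
  assumes "even n" "odd j" "j < n"
  shows "reach (tower_nfa n) {j} (block n) = {n - 1}"
proof -
  have "2 \<le> n"
    using assms by presburger
  have "reach (tower_nfa n) {j} (block n) = reach (tower_nfa n) ({0} \<union> {1}) (replicate (n - 1) False)"
    using assms by (simp add: block_def tower_nfa_def insert_commute)
  also have "\<dots> = reach (tower_nfa n) {0} (replicate (n - 1) False) \<union> reach (tower_nfa n) {1} (replicate (n - 1) False)"
    by (rule reach_Un)
  also have "\<dots> = {n - 1}"
    using \<open>2 \<le> n\<close> by (simp add: reach_tower_nfa_replicate)
  finally show ?thesis .
qed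

lemma reach_tower_nfa_blocks:
  assumes "even n" "odd j" "j < n"
  shows "reach (tower_nfa n) {j} (concat (replicate k (block n))) = (if k = 0 then {j} else {n - 1})"
  using assms
proof (induction k arbitrary: j)
  case 0
  then show ?case by simp
next
  case (Suc k)
  have "odd (n - 1)" "n - 1 < n"
    using Suc.prems by (cases n; simp)+
  with Suc show ?case
    by (simp add: reach_append reach_tower_nfa_block)
qed

lemma tower_word_in_lang_nfa:
  assumes "even n" "odd j" "j < n"
  shows "tower_word n j k \<in> lang (tower_nfa n)"
proof -
  have "odd (n - 1)"
    using assms by (cases n) simp_all
  have "reach (tower_nfa n) {0} (tower_word n j k) = (if k = 0 then {j} else {n - 1})"
    using assms by (simp add: tower_word_def reach_append reach_tower_nfa_replicate reach_tower_nfa_blocks)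
  with assms \<open>odd (n - 1)\<close> show ?thesis
    by (auto simp: lang_def tower_nfa_def)
qed

text \<open>Consecutive words differ by one inserted letter: a False in front, or a True that
  turns a leading run of n - 1 letters False into a new block.\<close>
lemma subseq_tower_word_Suc:
  assumes "0 < n"
  shows "subseq (tower_word n (t mod n) (t div n)) (tower_word n (Suc t mod n) (Suc t div n))"
proof (cases "Suc (t mod n) = n")
  case True
  then have "Suc t mod n = 0" "Suc t div n = Suc (t div n)" "t mod n = n - 1"
    by (simp_all add: mod_Suc div_Suc)
  then show ?thesis
    by (auto simp: tower_word_def block_def intro: list_emb_Cons)
next
  case False
  then have "Suc t mod n = Suc (t mod n)" "Suc t div n = t div n"
    by (simp_all add: mod_Suc div_Suc)
  then show ?thesis
    by (auto simp: tower_word_def intro: list_emb_Cons)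
qed

lemma length_tower_words: "length (tower_words n) = n * (n - 1) + 1"
  by (simp add: tower_words_def)

lemma nth_tower_words:
  "i < n * (n - 1) \<Longrightarrow> tower_words n ! i = tower_word n (i mod n) (i div n)"
  "i = n * (n - 1) \<Longrightarrow> tower_words n ! i = tower_word n n (n - 2)"
  by (simp_all add: tower_words_def nth_append)

lemma nth_tower_words_in_lang:
  assumes "even n" "0 < n" "i < length (tower_words n)"
  shows "tower_words n ! i \<in> (if even i then lang (tower_dfa n) else lang (tower_nfa n))"
proof (cases "i < n * (n - 1)")
  case True
  have "i div n < n - 1"
    using True by (simp add: less_mult_imp_div_less mult.commute)
  then have "2 \<le> n" "i div n + 2 \<le> n"
    by simp_all
  moreover have "even (i mod n) \<longleftrightarrow> even i"
    using \<open>even n\<close> by (simp add: even_iff_mod_2_eq_zero mod_mod_cancel)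
  ultimately show ?thesis
    using True tower_word_in_lang_dfa tower_word_in_lang_nfa[OF \<open>even n\<close> _ mod_less_divisor[OF \<open>0 < n\<close>]]
    by (simp add: nth_tower_words)
next
  case False
  then have last: "i = n * (n - 1)"
    using assms(3) by (simp add: length_tower_words)
  moreover have "2 \<le> n"
    using assms by presburger
  ultimately show ?thesis
    using \<open>even n\<close> nth_tower_words(2)[OF last] by (simp add: tower_word_in_lang_dfa)
qed

lemma subseq_tower_words_Suc:
  assumes "0 < n" "Suc i < length (tower_words n)"
  shows "subseq (tower_words n ! i) (tower_words n ! Suc i)"
proof (cases "Suc i < n * (n - 1)")
  case True
  then show ?thesis
    using subseq_tower_word_Suc[OF \<open>0 < n\<close>, of i] by (simp add: nth_tower_words)
next
  case False
  then have last: "Suc i = n * (n - 1)"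
    using assms(2) by (simp add: length_tower_words)
  then have "n - 1 \<noteq> 0"
    by auto
  then have "2 \<le> n"
    by simp
  with last have i: "i = (n - 1) + n * (n - 2)"
    by (cases n) (auto simp: algebra_simps)
  have "i mod n = n - 1" "i div n = n - 2"
    using \<open>2 \<le> n\<close> unfolding i by (simp_all only: mod_mult_self2 div_mult_self2) simp_all
  moreover have "tower_word n n k = False # tower_word n (n - 1) k" for k
    using \<open>0 < n\<close> by (cases n) (simp_all add: tower_word_def)
  ultimately show ?thesis
    using last nth_tower_words by (auto intro: list_emb_Cons)
qed

lemma tower_tower_words:
  assumes "even n" "0 < n"
  shows "tower (lang (tower_nfa n)) (lang (tower_dfa n)) (tower_words n)"
proof (rule tower_if_alternating)
  show "lang (tower_nfa n) \<inter> lang (tower_dfa n) = {}"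
    using assms by (intro lang_tower_nfa_dfa_disjoint) presburger
  show "tower_words n \<noteq> []"
    by (simp add: tower_words_def)
qed (use assms nth_tower_words_in_lang subseq_tower_words_Suc in auto)

theorem theorem8:
  fixes n :: nat
  assumes "even n" and "n > 0"
  shows "\<exists>A B. is_nfa n A \<and> is_dfa n B \<and>
           (\<exists>ws. tower (lang A) (lang B) ws \<and> length ws = n^2 - n + 1) \<and>
           \<not> (\<exists>f. infinite_tower (lang A) (lang B) f)"
proof -
  have "2 \<le> n"
    using assms by presburger
  moreover have "length (tower_words n) = n^2 - n + 1"
    by (simp add: length_tower_words power2_eq_square diff_mult_distrib2)
  ultimately show ?thesis
    using is_nfa_tower_nfa is_dfa_tower_dfa tower_tower_words[OF assms] no_infinite_tower_nfa_dfa
    by blast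
qed

end
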